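(* Let $M=I\times F$ with the metric $g=-dt^2+f(t)^2g_F$, where $I\subset\mathbb{R}$ is an open interval, $f:I\to(0,\infty)$ is smooth and $(F,g_F)$ is a Riemannian manifold with $l=\dim F>1$, and let $\overline\nabla$ be the semi-symmetric metric connection determined by $P=\frac{\partial}{\partial t}$. Then $(M,\overline\nabla)$ is Einstein with Einstein constant $\lambda$ if and only if $\lambda=0$, $f(t)=c_1e^t+c_2$ for some constants $c_1,c_2$, and $(F,\nabla^F)$ is Einstein with Einstein constant $(l-1)c_2^2$.
   Context: $\nabla$ is the Levi-Civita connection of $g$, $\pi(X)=g(X,P)$, and $\overline\nabla_XY=\nabla_XY+\pi(Y)X-g(X,Y)P$. Conventions: $\overline R(X,Y)Z=\overline\nabla_X\overline\nabla_YZ-\overline\nabla_Y\overline\nabla_XZ-\overline\nabla_{[X,Y]}Z$, $\overline{\mathrm{Ric}}(X,Y)=\sum_k\varepsilon_kg(\overline R(X,E_k)Y,E_k)$ for a local orthonormal frame $(E_k)$, $\varepsilon_k=g(E_k,E_k)$; Einstein with constant $\lambda$ means $\overline{\mathrm{Ric}}=\lambda g$. For the Levi-Civita connection $\nabla^F$ of $g_F$ the same conventions are used, and $(F,\nabla^F)$ Einstein with constant $\lambda_F$ means $\mathrm{Ric}^F=\lambda_Fg_F$. *)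

theory Defs
  imports "HOL-Analysis.Analysis"
begin

definition pd :: "(real^'m \<Rightarrow> real) \<Rightarrow> 'm \<Rightarrow> real^'m \<Rightarrow> real" where
  "pd \<phi> i x = deriv (\<lambda>s. \<phi> (x + s *\<^sub>R axis i 1)) 0"

inductive_set iter_partials :: "(real^'m \<Rightarrow> real) \<Rightarrow> (real^'m \<Rightarrow> real) set"
  for \<phi> where
  base: "\<phi> \<in> iter_partials \<phi>"
| step: "\<psi> \<in> iter_partials \<phi> \<Longrightarrow> pd \<psi> i \<in> iter_partials \<phi>"

definition smooth_on_coord :: "(real^'m) set \<Rightarrow> (real^'m \<Rightarrow> real) \<Rightarrow> bool" where
  "smooth_on_coord W \<phi> \<longleftrightarrow>
     (\<forall>\<psi> \<in> iter_partials \<phi>. continuous_on W \<psi> \<and>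
        (\<forall>x\<in>W. \<forall>i. (\<lambda>s. \<psi> (x + s *\<^sub>R axis i 1)) differentiable (at 0)))"

definition smooth_on_real :: "real set \<Rightarrow> (real \<Rightarrow> real) \<Rightarrow> bool" where
  "smooth_on_real I f \<longleftrightarrow> (\<forall>n. \<forall>t\<in>I. ((deriv ^^ n) f) differentiable (at t))"

definition semi_riem_metric :: "(real^'m) set \<Rightarrow> (real^'m \<Rightarrow> real^'m^'m) \<Rightarrow> bool" where
  "semi_riem_metric W G \<longleftrightarrow> open W \<and>
     (\<forall>i j. smooth_on_coord W (\<lambda>x. G x $ i $ j)) \<and>
     (\<forall>x\<in>W. transpose (G x) = G x \<and> invertible (G x))"

definition riem_metric :: "(real^'m) set \<Rightarrow> (real^'m \<Rightarrow> real^'m^'m) \<Rightarrow> bool" where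
  "riem_metric W G \<longleftrightarrow> semi_riem_metric W G \<and>
     (\<forall>x\<in>W. \<forall>v. v \<noteq> 0 \<longrightarrow> v \<bullet> (G x *v v) > 0)"

text \<open>Christoffel symbols of the Levi-Civita connection:
  nabla_{d_i} d_j = sum_k christoffel G x k i j d_k.\<close>
definition christoffel :: "(real^'m \<Rightarrow> real^'m^'m) \<Rightarrow> real^'m \<Rightarrow> 'm \<Rightarrow> 'm \<Rightarrow> 'm \<Rightarrow> real" where
  "christoffel G x k i j =
     (\<Sum>l\<in>UNIV. matrix_inv (G x) $ k $ l *
        (pd (\<lambda>y. G y $ j $ l) i x + pd (\<lambda>y. G y $ i $ l) j x - pd (\<lambda>y. G y $ i $ j) l x)) / 2"

text \<open>Connection coefficients of the semi-symmetric metric connection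
  nablabar_X Y = nabla_X Y + pi(Y) X - g(X,Y) P, with pi(X) = g(X,P).\<close>
definition ssm_coeff :: "(real^'m \<Rightarrow> real^'m^'m) \<Rightarrow> (real^'m \<Rightarrow> real^'m)
     \<Rightarrow> real^'m \<Rightarrow> 'm \<Rightarrow> 'm \<Rightarrow> 'm \<Rightarrow> real" where
  "ssm_coeff G P x k i j =
     christoffel G x k i j
     + (\<Sum>l\<in>UNIV. G x $ j $ l * P x $ l) * (if k = i then 1 else 0)
     - G x $ i $ j * P x $ k"

text \<open>Curvature components of a connection with coefficients Gam
  (nabla_{d_i} d_j = sum_k Gam x k i j d_k), with the convention
  R(X,Y)Z = nabla_X nabla_Y Z - nabla_Y nabla_X Z - nabla_[X,Y] Z:
  R(d_i,d_j) d_k = sum_l curv Gam x l i j k d_l.\<close>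
definition curv :: "(real^'m \<Rightarrow> 'm \<Rightarrow> 'm \<Rightarrow> 'm \<Rightarrow> real)
     \<Rightarrow> real^'m \<Rightarrow> 'm \<Rightarrow> 'm \<Rightarrow> 'm \<Rightarrow> 'm \<Rightarrow> real" where
  "curv Gam x l i j k =
     pd (\<lambda>y. Gam y l j k) i x - pd (\<lambda>y. Gam y l i k) j x
     + (\<Sum>m\<in>UNIV. Gam x m j k * Gam x l i m - Gam x m i k * Gam x l j m)"

text \<open>Ricci tensor Ric(X,Y) = sum_k eps_k g(R(X,E_k)Y,E_k), written in the
  frame-independent coordinate form sum_{a,b} g^{ab} g(R(X,d_a)Y,d_b);
  component (i,k) means X = d_i, Y = d_k.\<close>
definition ricci :: "(real^'m \<Rightarrow> real^'m^'m) \<Rightarrow> (real^'m \<Rightarrow> 'm \<Rightarrow> 'm \<Rightarrow> 'm \<Rightarrow> real)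
     \<Rightarrow> real^'m \<Rightarrow> 'm \<Rightarrow> 'm \<Rightarrow> real" where
  "ricci G Gam x i k =
     (\<Sum>a\<in>UNIV. \<Sum>b\<in>UNIV. matrix_inv (G x) $ a $ b *
        (\<Sum>l\<in>UNIV. curv Gam x l i a k * G x $ l $ b))"

definition einstein :: "(real^'m) set \<Rightarrow> (real^'m \<Rightarrow> real^'m^'m)
     \<Rightarrow> (real^'m \<Rightarrow> 'm \<Rightarrow> 'm \<Rightarrow> 'm \<Rightarrow> real) \<Rightarrow> real \<Rightarrow> bool" where
  "einstein W G Gam lam \<longleftrightarrow> (\<forall>x\<in>W. \<forall>i k. ricci G Gam x i k = lam * G x $ i $ k)"

text \<open>Coordinates on M are indexed by unit + 'n: Inl () is t, Inr i is x_i.\<close>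
definition tcoord :: "real^(unit + 'n::finite) \<Rightarrow> real" where
  "tcoord p = p $ Inl ()"

definition xcoord :: "real^(unit + 'n::finite) \<Rightarrow> real^'n" where
  "xcoord p = (\<chi> i. p $ Inr i)"

definition wp_domain :: "real set \<Rightarrow> (real^'n) set \<Rightarrow> (real^(unit + 'n::finite)) set" where
  "wp_domain I U = {p. tcoord p \<in> I \<and> xcoord p \<in> U}"

definition wp_metric :: "(real \<Rightarrow> real) \<Rightarrow> (real^'n \<Rightarrow> real^'n^'n)
     \<Rightarrow> real^(unit + 'n::finite) \<Rightarrow> real^(unit + 'n)^(unit + 'n)" where
  "wp_metric f GF p = (\<chi> a b. case (a, b) of
      (Inl _, Inl _) \<Rightarrow> -1
    | (Inr i, Inr j) \<Rightarrow> (f (tcoord p))^2 * GF (xcoord p) $ i $ j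
    | _ \<Rightarrow> 0)"

definition dt_field :: "real^(unit + 'n::finite) \<Rightarrow> real^(unit + 'n)" where
  "dt_field p = (\<chi> a. case a of Inl _ \<Rightarrow> 1 | Inr _ \<Rightarrow> 0)"

end

theory Submission
  imports Defs
begin

(* In the coordinates (t, x) the semi-symmetric connection of P = d/dt has closed-form
   coefficients, and its Ricci tensor is block diagonal:
     Ric(d_t, d_t) = l (f'' - f') / f,   Ric(d_t, d_i) = Ric(d_i, d_t) = 0,
     Ric(d_i, d_k) = Ric^F(d_i, d_k) - (f (f'' - f') + (l - 1) (f' - f)^2) g_F(d_i, d_k).
   Hence the Einstein condition is the ODE l (f'' - f') = - lam f together with
   Ric^F = kappa(t) g_F, kappa(t) = lam f^2 + f (f'' - f') + (l - 1) (f' - f)^2.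
   Since kappa must be constant, differentiating it along the ODE gives
   kappa' = 2 (l - 1) / l lam f^2 = 0, so lam = 0, f'' = f', f = c1 e^t + c2 and
   kappa = (l - 1) c2^2. *)

lemma sum_UNIV_Plus:
  "(\<Sum>a\<in>(UNIV::(unit+'n::finite) set). g a) = g (Inl ()) + (\<Sum>i\<in>UNIV. g (Inr i))"
proof -
  have "(\<Sum>a\<in>(UNIV::(unit+'n::finite) set). g a) = (\<Sum>a\<in>(UNIV <+> UNIV). g a)" by simp
  also have "\<dots> = sum (g \<circ> Inl) (UNIV::unit set) + sum (g \<circ> Inr) UNIV"
    by (rule sum.Plus) auto
  finally show ?thesis by (simp add: UNIV_unit)
qed

lemma sum_type_cases: "(a::unit+'n) = Inl () \<or> (\<exists>i. a = Inr i)"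
  by (cases a) auto

lemma mult_if_zero:
  "(if c then a else 0) * (b::'a::mult_zero) = (if c then a * b else 0)"
  "b * (if c then a else 0) = (if c then b * a else 0)"
  by simp_all

lemma pd_const: "pd (\<lambda>y. c) i p = 0"
  unfolding pd_def by simp

lemma pd_cong:
  assumes "open S" "x \<in> S" "\<forall>y\<in>S. \<phi> y = \<psi> y"
  shows "pd \<phi> i x = pd \<psi> i x"
proof -
  have "((\<lambda>s::real. x + s *\<^sub>R axis i 1) \<longlongrightarrow> x + 0 *\<^sub>R axis i 1) (nhds 0)"
    by (intro tendsto_intros filterlim_ident)
  then have "eventually (\<lambda>s::real. x + s *\<^sub>R axis i 1 \<in> S) (nhds 0)"
    using assms(1,2) by (simp add: topological_tendstoD)
  then show ?thesis
    unfolding pd_def using assms(3)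
    by (intro deriv_cong_ev[OF _ refl]) (auto elim: eventually_mono)
qed

lemma matrix_inv_inverse:
  assumes "invertible A"
  shows "A ** matrix_inv A = mat 1 \<and> matrix_inv A ** A = mat 1"
  using assms unfolding invertible_def matrix_inv_def by (rule someI_ex)

lemma matrix_inv_unique:
  fixes A :: "'a::comm_semiring_1^'n^'n"
  assumes "A ** B = mat 1" "B ** A = mat 1"
  shows "matrix_inv A = B"
proof -
  have inv: "invertible A" using assms unfolding invertible_def by blast
  let ?C = "matrix_inv A"
  have "?C = ?C ** (A ** B)" using assms by simp
  also have "\<dots> = (?C ** A) ** B" by (simp add: matrix_mul_assoc)
  also have "\<dots> = B" using matrix_inv_inverse[OF inv] by simp
  finally show ?thesis .
qed

lemma matrix_inv_mult_entry:
  assumes "invertible A"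
  shows "(\<Sum>l\<in>UNIV. matrix_inv A $ k $ l * A $ l $ j) = (if k = j then 1 else 0)"
    "(\<Sum>l\<in>UNIV. A $ k $ l * matrix_inv A $ l $ j) = (if k = j then 1 else 0)"
proof -
  have "(matrix_inv A ** A) $ k $ j = (if k = j then 1 else 0)"
       "(A ** matrix_inv A) $ k $ j = (if k = j then 1 else 0)"
    using matrix_inv_inverse[OF assms] by (simp_all add: mat_def)
  then show "(\<Sum>l\<in>UNIV. matrix_inv A $ k $ l * A $ l $ j) = (if k = j then 1 else 0)"
    "(\<Sum>l\<in>UNIV. A $ k $ l * matrix_inv A $ l $ j) = (if k = j then 1 else 0)"
    by (simp_all add: matrix_matrix_mult_def)
qed

lemma transpose_eq_imp_entry_sym:
  assumes "transpose A = A"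
  shows "A $ i $ j = A $ j $ i"
proof -
  have "transpose A $ j $ i = A $ j $ i" using assms by simp
  then show ?thesis by (simp add: transpose_def)
qed

lemma ricci_eq_curv_trace:
  assumes sym: "transpose (G x) = G x" and inv: "invertible (G x)"
  shows "ricci G Gam x i k = (\<Sum>a\<in>UNIV. curv Gam x a i a k)"
proof -
  have symm: "G x $ l $ b = G x $ b $ l" for l b
    using sym by (rule transpose_eq_imp_entry_sym)
  have "(\<Sum>b\<in>UNIV. matrix_inv (G x) $ a $ b * (\<Sum>l\<in>UNIV. curv Gam x l i a k * G x $ l $ b))
        = curv Gam x a i a k" for a
  proof -
    have "(\<Sum>b\<in>UNIV. matrix_inv (G x) $ a $ b * (\<Sum>l\<in>UNIV. curv Gam x l i a k * G x $ l $ b))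
        = (\<Sum>b\<in>UNIV. \<Sum>l\<in>UNIV. curv Gam x l i a k * (matrix_inv (G x) $ a $ b * G x $ b $ l))"
      by (simp add: sum_distrib_left symm mult_ac)
    also have "\<dots> = (\<Sum>l\<in>UNIV. curv Gam x l i a k * (\<Sum>b\<in>UNIV. matrix_inv (G x) $ a $ b * G x $ b $ l))"
      by (subst sum.swap) (simp add: sum_distrib_left)
    also have "\<dots> = curv Gam x a i a k"
      by (simp add: matrix_inv_mult_entry(1)[OF inv] if_distrib cong: if_cong)
    finally show ?thesis .
  qed
  then show ?thesis unfolding ricci_def by simp
qed

lemma curv_same_directions: "curv Gam x l i i k = 0"
  unfolding curv_def by simp

lemma christoffel_sym:
  assumes "open W" "x \<in> W" "\<forall>y\<in>W. transpose (G y) = G y"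
  shows "christoffel G x k i j = christoffel G x k j i"
proof -
  have "G y $ i $ j = G y $ j $ i" if "y \<in> W" for y i j
    using assms(3) that by (simp add: transpose_eq_imp_entry_sym)
  then have "pd (\<lambda>z. G z $ i $ j) l x = pd (\<lambda>z. G z $ j $ i) l x" for i j l
    by (intro pd_cong[OF assms(1,2)]) blast
  then show ?thesis unfolding christoffel_def by (simp add: algebra_simps)
qed

lemma einstein_const_unique:
  assumes "einstein W G Gam a" "einstein W G Gam b" "x \<in> W" "invertible (G x)"
  shows "a = b"
proof -
  from assms(4) obtain A' where A': "G x ** A' = mat 1" unfolding invertible_def by blast
  have "\<exists>i k. G x $ i $ k \<noteq> 0"
  proof (rule ccontr)
    assume "\<not> (\<exists>i k. G x $ i $ k \<noteq> 0)"
    then have "(G x ** A') $ j $ j = 0" for j by (simp add: matrix_matrix_mult_def)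
    with A' show False by (simp add: mat_def)
  qed
  then obtain i k where "G x $ i $ k \<noteq> 0" by blast
  moreover have "ricci G Gam x i k = a * G x $ i $ k" "ricci G Gam x i k = b * G x $ i $ k"
    using assms(1-3) unfolding einstein_def by blast+
  ultimately show ?thesis by simp
qed

subsection \<open>The warping function\<close>

lemma warping_einstein_const_eq_0:
  fixes f f1 f2 :: "real \<Rightarrow> real" and n lam C :: real
  assumes "open I" "t0 \<in> I" "f t0 \<noteq> 0" "n > 1"
    and f1: "\<And>t. t \<in> I \<Longrightarrow> (f has_real_derivative f1 t) (at t)"
    and f2: "\<And>t. t \<in> I \<Longrightarrow> (f1 has_real_derivative f2 t) (at t)"
    and time: "\<And>t. t \<in> I \<Longrightarrow> n * (f2 t - f1 t) = - lam * f t"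
    and fibre: "\<And>t. t \<in> I \<Longrightarrow> lam * f t ^ 2 + f t * (f2 t - f1 t) + (n - 1) * (f1 t - f t) ^ 2 = C"
  shows "lam = 0"
proof -
  \<comment> \<open>n C with f2 eliminated by the time equation, so that Q is differentiable\<close>
  define Q where "Q t = (n - 1) * lam * f t ^ 2 + n * (n - 1) * (f1 t - f t) ^ 2" for t
  have QC: "Q t = n * C" if "t \<in> I" for t
  proof -
    have "n * C = n * (lam * f t ^ 2) + f t * (n * (f2 t - f1 t)) + n * ((n - 1) * (f1 t - f t) ^ 2)"
      by (simp only: fibre[OF that, symmetric]) (simp add: algebra_simps)
    also have "\<dots> = Q t"
      by (simp only: time[OF that]) (simp add: Q_def algebra_simps power2_eq_square)
    finally show ?thesis by simp
  qed
  have Q0: "(Q has_real_derivative 0) (at t0)"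
    by (rule has_field_derivative_transform_within_open[OF DERIV_const assms(1,2)]) (simp add: QC)
  have "(Q has_real_derivative
      (n - 1) * lam * (2 * f t0 * f1 t0) + (n - 1) * (2 * (f1 t0 - f t0)) * (n * (f2 t0 - f1 t0))) (at t0)"
    unfolding Q_def[abs_def]
    by (rule derivative_eq_intros f1[OF assms(2)] f2[OF assms(2)] refl)+ (simp add: algebra_simps)
  also have "(n - 1) * lam * (2 * f t0 * f1 t0) + (n - 1) * (2 * (f1 t0 - f t0)) * (n * (f2 t0 - f1 t0))
      = 2 * (n - 1) * lam * f t0 ^ 2"
    by (simp only: time[OF assms(2)]) (simp add: algebra_simps power2_eq_square)
  finally have "2 * (n - 1) * lam * f t0 ^ 2 = 0" by (rule DERIV_unique[OF _ Q0])
  then show ?thesis using assms(3,4) by simp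
qed

lemma exp_affine_if_second_deriv_eq_deriv:
  fixes f f1 :: "real \<Rightarrow> real"
  assumes "open I" "connected I"
    and f1: "\<And>t. t \<in> I \<Longrightarrow> (f has_real_derivative f1 t) (at t)"
    and f2: "\<And>t. t \<in> I \<Longrightarrow> (f1 has_real_derivative f1 t) (at t)"
  obtains c1 c2 where "\<And>t. t \<in> I \<Longrightarrow> f t = c1 * exp t + c2"
proof -
  obtain c1 where c1: "\<And>t. t \<in> I \<Longrightarrow> f1 t * exp (- t) = c1"
  proof (rule DERIV_zero_connected_constant[OF assms(2,1) finite.emptyI])
    have d: "((\<lambda>s. f1 s * exp (- s)) has_real_derivative 0) (at t)" if "t \<in> I" for t
      using f2[OF that] by (auto intro!: derivative_eq_intros)
    then show "continuous_on I (\<lambda>s. f1 s * exp (- s))"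
      using DERIV_isCont continuous_at_imp_continuous_on by blast
    show "\<forall>x\<in>I - {}. ((\<lambda>s. f1 s * exp (- s)) has_real_derivative 0) (at x)" using d by blast
  qed blast
  obtain c2 where c2: "\<And>t. t \<in> I \<Longrightarrow> f t - c1 * exp t = c2"
  proof (rule DERIV_zero_connected_constant[OF assms(2,1) finite.emptyI])
    have d: "((\<lambda>s. f s - c1 * exp s) has_real_derivative 0) (at t)" if "t \<in> I" for t
    proof -
      have "f1 t = c1 * exp t" using c1[OF that] by (simp add: exp_minus field_simps)
      then show ?thesis using f1[OF that] by (auto intro!: derivative_eq_intros)
    qed
    then show "continuous_on I (\<lambda>s. f s - c1 * exp s)"
      using DERIV_isCont continuous_at_imp_continuous_on by blast
    show "\<forall>x\<in>I - {}. ((\<lambda>s. f s - c1 * exp s) has_real_derivative 0) (at x)" using d by blast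
  qed blast
  show thesis by (rule that[of c1 c2]) (use c2 in \<open>simp add: algebra_simps\<close>)
qed

lemma deriv_exp_affine:
  fixes f :: "real \<Rightarrow> real" and c1 c2 :: real
  assumes "open I" "\<forall>t\<in>I. f t = c1 * exp t + c2" "t \<in> I"
  shows "deriv f t = c1 * exp t" "deriv (deriv f) t = c1 * exp t"
proof -
  have f1: "deriv f s = c1 * exp s" if "s \<in> I" for s
  proof (rule DERIV_imp_deriv)
    have "((\<lambda>s. c1 * exp s + c2) has_real_derivative c1 * exp s) (at s)"
      by (auto intro!: derivative_eq_intros)
    then show "(f has_real_derivative c1 * exp s) (at s)"
      by (rule has_field_derivative_transform_within_open[OF _ assms(1) that]) (simp add: assms(2))
  qed
  show "deriv f t = c1 * exp t" by (rule f1[OF assms(3)])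
  show "deriv (deriv f) t = c1 * exp t"
  proof (rule DERIV_imp_deriv)
    have "((\<lambda>s. c1 * exp s) has_real_derivative c1 * exp t) (at t)"
      by (auto intro!: derivative_eq_intros)
    then show "(deriv f has_real_derivative c1 * exp t) (at t)"
      by (rule has_field_derivative_transform_within_open[OF _ assms(1,3)]) (simp add: f1)
  qed
qed

lemma tcoord_shift_t: "tcoord (p + s *\<^sub>R axis (Inl ()) 1) = tcoord p + s"
  by (simp add: tcoord_def axis_def)

lemma xcoord_shift_t: "xcoord (p + s *\<^sub>R axis (Inl ()) 1) = xcoord p"
  by (simp add: xcoord_def axis_def vec_eq_iff)

lemma tcoord_shift_x: "tcoord (p + s *\<^sub>R axis (Inr i) 1) = tcoord p"
  by (simp add: tcoord_def axis_def)

lemma xcoord_shift_x: "xcoord (p + s *\<^sub>R axis (Inr i) 1) = xcoord p + s *\<^sub>R axis i 1"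
  by (simp add: xcoord_def axis_def vec_eq_iff)

lemma pd_tcoord_fun_x: "pd (\<lambda>y. F (tcoord y)) (Inr i) p = 0"
  unfolding pd_def tcoord_shift_x by simp

lemma pd_xcoord_fun_t: "pd (\<lambda>y. H (xcoord y)) (Inl ()) p = 0"
  unfolding pd_def xcoord_shift_t by simp

lemma pd_xcoord_fun_x: "pd (\<lambda>y. H (xcoord y)) (Inr i) p = pd H i (xcoord p)"
  unfolding pd_def xcoord_shift_x by simp

lemma pd_product_t:
  assumes "(F has_real_derivative D) (at (tcoord p))"
  shows "pd (\<lambda>y. F (tcoord y) * C (xcoord y)) (Inl ()) p = D * C (xcoord p)"
proof -
  have "((\<lambda>s. F (s + tcoord p)) has_real_derivative D) (at 0)"
    using assms DERIV_shift[of F D 0 "tcoord p"] by simp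
  then have "((\<lambda>s. F (tcoord p + s) * C (xcoord p)) has_real_derivative D * C (xcoord p)) (at 0)"
    by (auto intro!: derivative_eq_intros simp: add.commute)
  then show ?thesis unfolding pd_def tcoord_shift_t xcoord_shift_t by (rule DERIV_imp_deriv)
qed

lemma pd_product_x:
  assumes "(\<lambda>s. H (xcoord p + s *\<^sub>R axis k 1)) differentiable (at 0)"
  shows "pd (\<lambda>y. F (tcoord y) * H (xcoord y)) (Inr k) p = F (tcoord p) * pd H k (xcoord p)"
proof -
  have "((\<lambda>s. H (xcoord p + s *\<^sub>R axis k 1)) has_real_derivative pd H k (xcoord p)) (at 0)"
    using assms unfolding pd_def by (simp add: DERIV_deriv_iff_real_differentiable)
  then have "((\<lambda>s. F (tcoord p) * H (xcoord p + s *\<^sub>R axis k 1)) has_real_derivative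
      F (tcoord p) * pd H k (xcoord p)) (at 0)"
    by (rule DERIV_cmult)
  then show ?thesis unfolding pd_def tcoord_shift_x xcoord_shift_x by (rule DERIV_imp_deriv)
qed

definition wp_point :: "real \<Rightarrow> real^'n \<Rightarrow> real^(unit+'n::finite)" where
  "wp_point t x = (\<chi> a. case a of Inl _ \<Rightarrow> t | Inr i \<Rightarrow> x $ i)"

lemma wp_point_coords [simp]: "tcoord (wp_point t x) = t" "xcoord (wp_point t x) = x"
  by (simp_all add: wp_point_def tcoord_def xcoord_def vec_eq_iff)

lemma wp_metric_simps [simp]:
  "wp_metric f GF p $ Inl u $ Inl v = -1"
  "wp_metric f GF p $ Inl u $ Inr j = 0"
  "wp_metric f GF p $ Inr i $ Inl v = 0"
  "wp_metric f GF p $ Inr i $ Inr j = f (tcoord p) ^ 2 * GF (xcoord p) $ i $ j"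
  by (simp_all add: wp_metric_def)

lemma dt_field_simps [simp]: "dt_field p $ Inl u = 1" "dt_field p $ Inr i = 0"
  by (simp_all add: dt_field_def)

definition wp_metric_inv :: "(real \<Rightarrow> real) \<Rightarrow> (real^'n \<Rightarrow> real^'n^'n)
     \<Rightarrow> real^(unit + 'n::finite) \<Rightarrow> real^(unit + 'n)^(unit + 'n)" where
  "wp_metric_inv f GF p = (\<chi> a b. case (a, b) of
      (Inl _, Inl _) \<Rightarrow> -1
    | (Inr i, Inr j) \<Rightarrow> matrix_inv (GF (xcoord p)) $ i $ j / (f (tcoord p))^2
    | _ \<Rightarrow> 0)"

lemma wp_metric_inv_simps [simp]:
  "wp_metric_inv f GF p $ Inl u $ Inl v = -1"
  "wp_metric_inv f GF p $ Inl u $ Inr j = 0"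
  "wp_metric_inv f GF p $ Inr i $ Inl v = 0"
  "wp_metric_inv f GF p $ Inr i $ Inr j = matrix_inv (GF (xcoord p)) $ i $ j / (f (tcoord p))^2"
  by (simp_all add: wp_metric_inv_def)

definition wp_ssm_coeff :: "(real \<Rightarrow> real) \<Rightarrow> (real^'n \<Rightarrow> real^'n^'n) \<Rightarrow> real^(unit+'n::finite)
    \<Rightarrow> (unit+'n) \<Rightarrow> (unit+'n) \<Rightarrow> (unit+'n) \<Rightarrow> real" where
 "wp_ssm_coeff f GF p k i j = (case k of
   Inl _ \<Rightarrow> (case (i, j) of (Inr i', Inr j') \<Rightarrow>
        (f (tcoord p) * deriv f (tcoord p) - f (tcoord p)^2) * GF (xcoord p) $ i' $ j' | _ \<Rightarrow> 0)
 | Inr k' \<Rightarrow> (case (i, j) of (Inl _, Inl _) \<Rightarrow> 0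
      | (Inl _, Inr j') \<Rightarrow> (if k' = j' then deriv f (tcoord p) / f (tcoord p) else 0)
      | (Inr i', Inl _) \<Rightarrow> (if k' = i' then deriv f (tcoord p) / f (tcoord p) - 1 else 0)
      | (Inr i', Inr j') \<Rightarrow> christoffel GF (xcoord p) k' i' j'))"

lemma wp_ssm_coeff_simps:
  "wp_ssm_coeff f GF p (Inl u) (Inl v) (Inl w) = 0"
  "wp_ssm_coeff f GF p (Inl u) (Inl v) (Inr j) = 0"
  "wp_ssm_coeff f GF p (Inl u) (Inr i) (Inl w) = 0"
  "wp_ssm_coeff f GF p (Inl u) (Inr i) (Inr j)
     = (f (tcoord p) * deriv f (tcoord p) - f (tcoord p)^2) * GF (xcoord p) $ i $ j"
  "wp_ssm_coeff f GF p (Inr k) (Inl v) (Inl w) = 0"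
  "wp_ssm_coeff f GF p (Inr k) (Inl v) (Inr j)
     = (if k = j then deriv f (tcoord p) / f (tcoord p) else 0)"
  "wp_ssm_coeff f GF p (Inr k) (Inr i) (Inl w)
     = (if k = i then deriv f (tcoord p) / f (tcoord p) - 1 else 0)"
  "wp_ssm_coeff f GF p (Inr k) (Inr i) (Inr j) = christoffel GF (xcoord p) k i j"
  by (simp_all add: wp_ssm_coeff_def)

subsection \<open>Curvature of the semi-symmetric connection\<close>

locale lorentzian_warped_product =
  fixes I :: "real set" and f :: "real \<Rightarrow> real"
    and U :: "(real^'n::finite) set" and GF :: "real^'n \<Rightarrow> real^'n^'n"
  assumes open_I: "open I" and f_pos: "\<forall>t\<in>I. f t > 0"
    and f_differentiable: "\<forall>t\<in>I. f differentiable at t"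
    and deriv_f_differentiable: "\<forall>t\<in>I. deriv f differentiable at t"
    and metric_F: "semi_riem_metric U GF"
begin

abbreviation "D \<equiv> wp_domain I U"
abbreviation "G \<equiv> wp_metric f GF"
abbreviation "f1 \<equiv> deriv f"
abbreviation "f2 \<equiv> deriv (deriv f)"

lemma open_U: "open U"
  using metric_F by (simp add: semi_riem_metric_def)

lemma GF_transpose: "\<forall>x\<in>U. transpose (GF x) = GF x"
  using metric_F by (simp add: semi_riem_metric_def)

lemma GF_sym: "x \<in> U \<Longrightarrow> GF x $ i $ j = GF x $ j $ i"
  using GF_transpose by (simp add: transpose_eq_imp_entry_sym)

lemma GF_invertible: "x \<in> U \<Longrightarrow> invertible (GF x)"
  using metric_F by (simp add: semi_riem_metric_def)

lemma GF_differentiable: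
  assumes "x \<in> U"
  shows "(\<lambda>s. GF (x + s *\<^sub>R axis k 1) $ i $ j) differentiable (at 0)"
proof -
  have "smooth_on_coord U (\<lambda>x. GF x $ i $ j)"
    using metric_F by (simp add: semi_riem_metric_def)
  then show ?thesis
    using assms iter_partials.base unfolding smooth_on_coord_def by fastforce
qed

lemma f_deriv: "t \<in> I \<Longrightarrow> (f has_real_derivative f1 t) (at t)"
  using f_differentiable by (simp add: DERIV_deriv_iff_real_differentiable)

lemma f1_deriv: "t \<in> I \<Longrightarrow> (f1 has_real_derivative f2 t) (at t)"
  using deriv_f_differentiable by (simp add: DERIV_deriv_iff_real_differentiable)

lemma mem_D_iff: "p \<in> D \<longleftrightarrow> tcoord p \<in> I \<and> xcoord p \<in> U"
  by (simp add: wp_domain_def)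

lemma f_tcoord_nonzero: "p \<in> D \<Longrightarrow> f (tcoord p) \<noteq> 0"
  using f_pos by (fastforce simp: mem_D_iff)

lemma open_D: "open D"
proof -
  have "D = tcoord -` I \<inter> xcoord -` U" by (auto simp: wp_domain_def)
  moreover have "open (tcoord -` I :: (real^(unit+'n)) set)"
    unfolding tcoord_def by (rule open_vimage_vec_nth[OF open_I])
  moreover have "open (xcoord -` U :: (real^(unit+'n)) set)"
  proof (rule continuous_open_vimage[OF open_U])
    fix x :: "real^(unit+'n)"
    show "continuous (at x) xcoord" unfolding xcoord_def isCont_def
      by (rule tendsto_vec_lambda) (intro tendsto_intros)
  qed
  ultimately show ?thesis by auto
qed

lemma wp_metric_inverse:
  assumes p: "p \<in> D"
  shows "G p ** wp_metric_inv f GF p = mat 1" "wp_metric_inv f GF p ** G p = mat 1"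
proof -
  have x: "xcoord p \<in> U" using p by (simp add: mem_D_iff)
  have fnz: "f (tcoord p) \<noteq> 0" using f_tcoord_nonzero[OF p] .
  have "(G p ** wp_metric_inv f GF p) $ a $ b = mat 1 $ a $ b" for a b
    using sum_type_cases[of a] sum_type_cases[of b]
    by (elim disjE exE) (simp_all add: matrix_matrix_mult_def sum_UNIV_Plus mat_def fnz
        matrix_inv_mult_entry(2)[OF GF_invertible[OF x]])
  then show *: "G p ** wp_metric_inv f GF p = mat 1" by (simp add: vec_eq_iff)
  from * show "wp_metric_inv f GF p ** G p = mat 1" using matrix_left_right_inverse by blast
qed

lemma matrix_inv_wp_metric: "p \<in> D \<Longrightarrow> matrix_inv (G p) = wp_metric_inv f GF p"
  using wp_metric_inverse matrix_inv_unique by blast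

lemma invertible_wp_metric: "p \<in> D \<Longrightarrow> invertible (G p)"
  using wp_metric_inverse unfolding invertible_def by blast

lemma transpose_wp_metric: "p \<in> D \<Longrightarrow> transpose (G p) = G p"
proof -
  assume p: "p \<in> D"
  have "G p $ b $ a = G p $ a $ b" for a b
    using sum_type_cases[of a] sum_type_cases[of b] GF_sym p
    by (elim disjE exE) (simp_all add: mem_D_iff)
  then show ?thesis by (simp add: vec_eq_iff transpose_def)
qed

lemma pd_wp_metric_t:
  assumes p: "p \<in> D"
  shows "pd (\<lambda>y. f (tcoord y)^2 * GF (xcoord y) $ i $ j) (Inl ()) p
       = 2 * f (tcoord p) * f1 (tcoord p) * GF (xcoord p) $ i $ j"
proof -
  have "tcoord p \<in> I" using p by (simp add: mem_D_iff)
  then have "((\<lambda>s. f s ^ 2) has_real_derivative 2 * f (tcoord p) * f1 (tcoord p)) (at (tcoord p))"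
    using f_deriv by (auto intro!: derivative_eq_intros)
  from pd_product_t[where C = "\<lambda>z. GF z $ i $ j", OF this] show ?thesis by simp
qed

lemma pd_wp_metric_x:
  assumes p: "p \<in> D"
  shows "pd (\<lambda>y. f (tcoord y)^2 * GF (xcoord y) $ i $ j) (Inr k) p
       = f (tcoord p)^2 * pd (\<lambda>z. GF z $ i $ j) k (xcoord p)"
proof -
  have "xcoord p \<in> U" using p by (simp add: mem_D_iff)
  from pd_product_x[where F = "\<lambda>s. f s ^ 2" and H = "\<lambda>z. GF z $ i $ j", OF GF_differentiable[OF this]]
  show ?thesis by simp
qed

lemma christoffel_wp_metric:
  assumes p: "p \<in> D"
  defines "t \<equiv> tcoord p" and "x \<equiv> xcoord p"
  shows "christoffel G p (Inl ()) (Inl ()) (Inl ()) = 0"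
    "christoffel G p (Inl ()) (Inl ()) (Inr j) = 0"
    "christoffel G p (Inl ()) (Inr i) (Inl ()) = 0"
    "christoffel G p (Inl ()) (Inr i) (Inr j) = f t * f1 t * GF x $ i $ j"
    "christoffel G p (Inr k) (Inl ()) (Inl ()) = 0"
    "christoffel G p (Inr k) (Inl ()) (Inr j) = (if k = j then f1 t / f t else 0)"
    "christoffel G p (Inr k) (Inr i) (Inl ()) = (if k = i then f1 t / f t else 0)"
    "christoffel G p (Inr k) (Inr i) (Inr j) = christoffel GF x k i j"
proof -
  have xU: "x \<in> U" using p by (simp add: mem_D_iff x_def)
  have fnz: "f t \<noteq> 0" using f_tcoord_nonzero[OF p] by (simp add: t_def)
  note simps = christoffel_def matrix_inv_wp_metric[OF p] sum_UNIV_Plus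
     pd_wp_metric_t[OF p] pd_wp_metric_x[OF p] pd_const t_def[symmetric] x_def[symmetric]
  show "christoffel G p (Inl ()) (Inl ()) (Inl ()) = 0"
    "christoffel G p (Inl ()) (Inl ()) (Inr j) = 0"
    "christoffel G p (Inl ()) (Inr i) (Inl ()) = 0"
    "christoffel G p (Inl ()) (Inr i) (Inr j) = f t * f1 t * GF x $ i $ j"
    "christoffel G p (Inr k) (Inl ()) (Inl ()) = 0"
    by (simp_all add: simps)
  have mixed: "(\<Sum>l\<in>UNIV. matrix_inv (GF x) $ k $ l / f t ^ 2 * (2 * f t * f1 t * GF x $ j $ l)) / 2
       = (if k = j then f1 t / f t else 0)" for j
  proof -
    have "(\<Sum>l\<in>UNIV. matrix_inv (GF x) $ k $ l / f t ^ 2 * (2 * f t * f1 t * GF x $ j $ l)) / 2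
        = (f1 t / f t) * (\<Sum>l\<in>UNIV. matrix_inv (GF x) $ k $ l * GF x $ l $ j)"
      using fnz by (simp add: sum_distrib_left sum_divide_distrib GF_sym[OF xU, of j]
          power2_eq_square field_simps)
    then show ?thesis by (simp add: matrix_inv_mult_entry(1)[OF GF_invertible[OF xU]])
  qed
  show "christoffel G p (Inr k) (Inl ()) (Inr j) = (if k = j then f1 t / f t else 0)"
    using mixed[of j] by (simp add: simps)
  show "christoffel G p (Inr k) (Inr i) (Inl ()) = (if k = i then f1 t / f t else 0)"
    using mixed[of i] by (simp add: simps)
  have "(\<Sum>l\<in>UNIV. matrix_inv (GF x) $ k $ l / f t ^ 2 *
          (f t ^ 2 * pd (\<lambda>z. GF z $ j $ l) i x + f t ^ 2 * pd (\<lambda>z. GF z $ i $ l) j x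
           - f t ^ 2 * pd (\<lambda>z. GF z $ i $ j) l x))
      = (\<Sum>l\<in>UNIV. matrix_inv (GF x) $ k $ l *
          (pd (\<lambda>z. GF z $ j $ l) i x + pd (\<lambda>z. GF z $ i $ l) j x - pd (\<lambda>z. GF z $ i $ j) l x))"
    using fnz by (intro sum.cong) (simp_all add: field_simps)
  then show "christoffel G p (Inr k) (Inr i) (Inr j) = christoffel GF x k i j"
    by (simp add: simps)
qed

lemma ssm_coeff_wp_metric:
  assumes "p \<in> D"
  shows "ssm_coeff G dt_field p k i j = wp_ssm_coeff f GF p k i j"
  using sum_type_cases[of k] sum_type_cases[of i] sum_type_cases[of j]
  by (elim disjE exE) (simp_all add: ssm_coeff_def christoffel_wp_metric[OF assms] sum_UNIV_Plus
      wp_ssm_coeff_simps algebra_simps power2_eq_square)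

lemma ricci_wp_eq_curv_trace:
  assumes p: "p \<in> D"
  shows "ricci G (ssm_coeff G dt_field) p i k = (\<Sum>a\<in>UNIV. curv (wp_ssm_coeff f GF) p a i a k)"
proof -
  have coeff: "\<forall>y\<in>D. ssm_coeff G dt_field y a b c = wp_ssm_coeff f GF y a b c" for a b c
    using ssm_coeff_wp_metric by blast
  have "curv (ssm_coeff G dt_field) p l i j k = curv (wp_ssm_coeff f GF) p l i j k" for l i j k
    unfolding curv_def by (simp add: pd_cong[OF open_D p coeff] ssm_coeff_wp_metric[OF p])
  then show ?thesis
    by (simp add: ricci_eq_curv_trace[of G p, OF transpose_wp_metric[OF p] invertible_wp_metric[OF p]])
qed

lemma pd_wp_ssm_coeff:
  assumes p: "p \<in> D"
  defines "t \<equiv> tcoord p" and "x \<equiv> xcoord p"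
  shows
   "pd (\<lambda>y. wp_ssm_coeff f GF y (Inr A) (Inr B) (Inl ())) (Inl ()) p
      = (if A = B then (f2 t * f t - f1 t * f1 t) / (f t * f t) else 0)"
   "pd (\<lambda>y. wp_ssm_coeff f GF y (Inl ()) (Inr B) (Inr K)) (Inl ()) p
      = (f1 t * f1 t + f t * f2 t - 2 * f t * f1 t) * GF x $ B $ K"
   "pd (\<lambda>y. wp_ssm_coeff f GF y (Inr A) (Inr B) (Inr K)) (Inr J) p
      = pd (\<lambda>z. christoffel GF z A B K) J x"
   "pd (\<lambda>y. wp_ssm_coeff f GF y (Inr A) (Inr B) (Inr K)) (Inl ()) p = 0"
   "pd (\<lambda>y. wp_ssm_coeff f GF y (Inr A) (Inl ()) (Inr K)) (Inr J) p = 0"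
   "pd (\<lambda>y. wp_ssm_coeff f GF y (Inr A) (Inr B) (Inl ())) (Inr J) p = 0"
   "pd (\<lambda>y. wp_ssm_coeff f GF y (Inl ()) (Inl ()) c) d p = 0"
   "pd (\<lambda>y. wp_ssm_coeff f GF y (Inl ()) (Inr B) (Inl ())) d p = 0"
   "pd (\<lambda>y. wp_ssm_coeff f GF y (Inr A) (Inl ()) (Inl ())) d p = 0"
proof -
  have tI: "t \<in> I" using p by (simp add: mem_D_iff t_def)
  have fnz: "f t \<noteq> 0" using f_tcoord_nonzero[OF p] by (simp add: t_def)
  have "((\<lambda>s. f1 s / f s - 1) has_real_derivative (f2 t * f t - f1 t * f1 t) / (f t * f t)) (at t)"
    using f_deriv[OF tI] f1_deriv[OF tI] fnz
    by (auto intro!: derivative_eq_intros simp: power2_eq_square)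
  from pd_product_t[of "\<lambda>s. f1 s / f s - 1", OF this[unfolded t_def], of "\<lambda>_. 1"]
  show "pd (\<lambda>y. wp_ssm_coeff f GF y (Inr A) (Inr B) (Inl ())) (Inl ()) p
      = (if A = B then (f2 t * f t - f1 t * f1 t) / (f t * f t) else 0)"
    by (simp add: wp_ssm_coeff_simps pd_const t_def)
  have "((\<lambda>s. f s * f1 s - f s ^ 2) has_real_derivative (f1 t * f1 t + f t * f2 t - 2 * f t * f1 t)) (at t)"
    using f_deriv[OF tI] f1_deriv[OF tI]
    by (auto intro!: derivative_eq_intros simp: power2_eq_square)
  from pd_product_t[of "\<lambda>s. f s * f1 s - f s ^ 2", OF this[unfolded t_def], of "\<lambda>z. GF z $ B $ K"]
  show "pd (\<lambda>y. wp_ssm_coeff f GF y (Inl ()) (Inr B) (Inr K)) (Inl ()) p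
      = (f1 t * f1 t + f t * f2 t - 2 * f t * f1 t) * GF x $ B $ K"
    by (simp add: wp_ssm_coeff_simps t_def x_def)
  show "pd (\<lambda>y. wp_ssm_coeff f GF y (Inr A) (Inr B) (Inr K)) (Inr J) p
      = pd (\<lambda>z. christoffel GF z A B K) J x"
    using pd_xcoord_fun_x[of "\<lambda>z. christoffel GF z A B K"] by (simp add: wp_ssm_coeff_simps x_def)
  show "pd (\<lambda>y. wp_ssm_coeff f GF y (Inr A) (Inr B) (Inr K)) (Inl ()) p = 0"
    using pd_xcoord_fun_t[of "\<lambda>z. christoffel GF z A B K"] by (simp add: wp_ssm_coeff_simps)
  show "pd (\<lambda>y. wp_ssm_coeff f GF y (Inr A) (Inl ()) (Inr K)) (Inr J) p = 0"
    using pd_tcoord_fun_x[of "\<lambda>s. if A = K then f1 s / f s else 0"] by (simp add: wp_ssm_coeff_simps)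
  show "pd (\<lambda>y. wp_ssm_coeff f GF y (Inr A) (Inr B) (Inl ())) (Inr J) p = 0"
    using pd_tcoord_fun_x[of "\<lambda>s. if A = B then f1 s / f s - 1 else 0"]
    by (simp add: wp_ssm_coeff_simps)
  show "pd (\<lambda>y. wp_ssm_coeff f GF y (Inl ()) (Inl ()) c) d p = 0"
    using sum_type_cases[of c] by (auto simp: wp_ssm_coeff_simps pd_const)
  show "pd (\<lambda>y. wp_ssm_coeff f GF y (Inl ()) (Inr B) (Inl ())) d p = 0"
    "pd (\<lambda>y. wp_ssm_coeff f GF y (Inr A) (Inl ()) (Inl ())) d p = 0"
    by (simp_all add: wp_ssm_coeff_simps pd_const)
qed

lemma ricci_wp_tt:
  assumes p: "p \<in> D"
  defines "t \<equiv> tcoord p"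
  shows "ricci G (ssm_coeff G dt_field) p (Inl ()) (Inl ()) = real CARD('n) * ((f2 t - f1 t) / f t)"
proof -
  have fnz: "f t \<noteq> 0" using f_tcoord_nonzero[OF p] by (simp add: t_def)
  have "curv (wp_ssm_coeff f GF) p (Inr A) (Inl ()) (Inr A) (Inl ()) = (f2 t - f1 t) / f t" for A
  proof -
    have "curv (wp_ssm_coeff f GF) p (Inr A) (Inl ()) (Inr A) (Inl ()) =
       (f2 t * f t - f1 t * f1 t) / (f t * f t) + (f1 t / f t - 1) * (f1 t / f t)"
      unfolding curv_def
      by (simp only: pd_wp_ssm_coeff[OF p] sum_UNIV_Plus)
         (simp add: wp_ssm_coeff_simps t_def mult_if_zero sum_subtractf sum.distrib)
    also have "\<dots> = (f2 t - f1 t) / f t" using fnz by (simp add: field_simps)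
    finally show ?thesis .
  qed
  then show ?thesis by (simp add: ricci_wp_eq_curv_trace[OF p] sum_UNIV_Plus curv_same_directions)
qed

lemma ricci_wp_tx:
  assumes p: "p \<in> D"
  shows "ricci G (ssm_coeff G dt_field) p (Inl ()) (Inr K) = 0"
proof -
  have "curv (wp_ssm_coeff f GF) p (Inr A) (Inl ()) (Inr A) (Inr K) = 0" for A
    unfolding curv_def
    by (simp only: pd_wp_ssm_coeff[OF p] sum_UNIV_Plus)
       (simp add: wp_ssm_coeff_simps mult_if_zero sum_subtractf sum.distrib)
  then show ?thesis by (simp add: ricci_wp_eq_curv_trace[OF p] sum_UNIV_Plus curv_same_directions)
qed

lemma ricci_wp_xt:
  assumes p: "p \<in> D"
  shows "ricci G (ssm_coeff G dt_field) p (Inr K) (Inl ()) = 0"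
proof -
  have x: "xcoord p \<in> U" using p by (simp add: mem_D_iff)
  have T: "curv (wp_ssm_coeff f GF) p (Inl ()) (Inr K) (Inl ()) (Inl ()) = 0"
    unfolding curv_def
    by (simp only: pd_wp_ssm_coeff[OF p] sum_UNIV_Plus) (simp add: wp_ssm_coeff_simps)
  have A: "curv (wp_ssm_coeff f GF) p (Inr A) (Inr K) (Inr A) (Inl ()) =
      (f1 (tcoord p) / f (tcoord p) - 1) *
       (christoffel GF (xcoord p) A K A - christoffel GF (xcoord p) A A K)" for A
    unfolding curv_def
    by (simp only: pd_wp_ssm_coeff[OF p] sum_UNIV_Plus)
       (simp add: wp_ssm_coeff_simps mult_if_zero sum_subtractf algebra_simps)
  have "(\<Sum>A\<in>UNIV. christoffel GF (xcoord p) A K A - christoffel GF (xcoord p) A A K) = 0"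
    using christoffel_sym[OF open_U x GF_transpose] by simp
  then show ?thesis
    by (simp add: ricci_wp_eq_curv_trace[OF p] sum_UNIV_Plus T A sum_distrib_left[symmetric])
qed

lemma ricci_wp_xx:
  assumes p: "p \<in> D"
  defines "t \<equiv> tcoord p" and "x \<equiv> xcoord p"
  shows "ricci G (ssm_coeff G dt_field) p (Inr J) (Inr K) = ricci GF (christoffel GF) x J K
        - (f t * (f2 t - f1 t) + (real CARD('n) - 1) * (f1 t - f t)^2) * GF x $ J $ K"
proof -
  let ?c = "f t * f1 t - f t ^ 2" and ?b = "f1 t / f t - 1"
  have xU: "x \<in> U" using p by (simp add: mem_D_iff x_def)
  have fnz: "f t \<noteq> 0" using f_tcoord_nonzero[OF p] by (simp add: t_def)
  have T: "curv (wp_ssm_coeff f GF) p (Inl ()) (Inr J) (Inl ()) (Inr K) =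
     f1 t / f t * ?c * GF x $ J $ K - (f1 t * f1 t + f t * f2 t - 2 * f t * f1 t) * GF x $ J $ K"
    unfolding curv_def
    by (simp only: pd_wp_ssm_coeff[OF p] sum_UNIV_Plus)
       (simp add: wp_ssm_coeff_simps t_def x_def mult_if_zero sum_subtractf sum.distrib
         field_simps fnz power2_eq_square)
  have A: "curv (wp_ssm_coeff f GF) p (Inr A) (Inr J) (Inr A) (Inr K) =
     curv (christoffel GF) x A J A K + ?c * GF x $ A $ K * (if A = J then ?b else 0)
      - ?c * GF x $ J $ K * ?b" for A
    unfolding curv_def
    by (simp only: pd_wp_ssm_coeff[OF p] sum_UNIV_Plus)
       (simp add: wp_ssm_coeff_simps t_def x_def algebra_simps)
  have S: "(\<Sum>A\<in>UNIV. curv (wp_ssm_coeff f GF) p (Inr A) (Inr J) (Inr A) (Inr K)) =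
     ricci GF (christoffel GF) x J K + ?c * GF x $ J $ K * ?b
      - real CARD('n) * (?c * GF x $ J $ K * ?b)"
    by (simp add: A sum.distrib sum_subtractf mult_if_zero
        ricci_eq_curv_trace[of GF x, OF GF_transpose[rule_format, OF xU] GF_invertible[OF xU]])
  show ?thesis
    by (simp only: ricci_wp_eq_curv_trace[OF p] sum_UNIV_Plus T S)
       (simp add: field_simps fnz power2_eq_square)
qed

lemma einstein_iff_warping_ode:
  assumes "U \<noteq> {}"
  shows "einstein D G (ssm_coeff G dt_field) lam \<longleftrightarrow>
     (\<forall>t\<in>I. real CARD('n) * (f2 t - f1 t) = - lam * f t) \<and>
     (\<forall>t\<in>I. einstein U GF (christoffel GF)
        (lam * f t ^ 2 + f t * (f2 t - f1 t) + (real CARD('n) - 1) * (f1 t - f t) ^ 2))"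
    (is "_ \<longleftrightarrow> ?time \<and> ?fibre")
proof
  assume E: "einstein D G (ssm_coeff G dt_field) lam"
  obtain x0 where x0: "x0 \<in> U" using assms by blast
  have "real CARD('n) * (f2 t - f1 t) = - lam * f t" if "t \<in> I" for t
  proof -
    have p: "wp_point t x0 \<in> D" using that x0 by (simp add: mem_D_iff)
    have "real CARD('n) * ((f2 t - f1 t) / f t) = - lam"
      using E p ricci_wp_tt[OF p] unfolding einstein_def by simp
    then show ?thesis using f_tcoord_nonzero[OF p] by (simp add: field_simps)
  qed
  moreover have "einstein U GF (christoffel GF)
      (lam * f t ^ 2 + f t * (f2 t - f1 t) + (real CARD('n) - 1) * (f1 t - f t) ^ 2)"
    if "t \<in> I" for t
    unfolding einstein_def
  proof (intro ballI allI)
    fix x i k assume "x \<in> U"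
    then have p: "wp_point t x \<in> D" using that by (simp add: mem_D_iff)
    show "ricci GF (christoffel GF) x i k =
        (lam * f t ^ 2 + f t * (f2 t - f1 t) + (real CARD('n) - 1) * (f1 t - f t) ^ 2) * GF x $ i $ k"
      using E p ricci_wp_xx[OF p, of i k] unfolding einstein_def by (simp add: algebra_simps)
  qed
  ultimately show "?time \<and> ?fibre" by blast
next
  assume time_fibre: "?time \<and> ?fibre"
  show "einstein D G (ssm_coeff G dt_field) lam"
    unfolding einstein_def
  proof (intro ballI allI)
    fix p i k assume p: "p \<in> D"
    then have t: "real CARD('n) * (f2 (tcoord p) - f1 (tcoord p)) = - lam * f (tcoord p)"
      and x: "einstein U GF (christoffel GF) (lam * f (tcoord p) ^ 2
        + f (tcoord p) * (f2 (tcoord p) - f1 (tcoord p))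
        + (real CARD('n) - 1) * (f1 (tcoord p) - f (tcoord p)) ^ 2)"
      using time_fibre by (auto simp: mem_D_iff)
    have "xcoord p \<in> U" using p by (simp add: mem_D_iff)
    then show "ricci G (ssm_coeff G dt_field) p i k = lam * G p $ i $ k"
      using sum_type_cases[of i] sum_type_cases[of k] x f_tcoord_nonzero[OF p] t
      by (elim disjE exE)
         (simp_all add: ricci_wp_tt[OF p] ricci_wp_tx[OF p] ricci_wp_xt[OF p] ricci_wp_xx[OF p]
           einstein_def field_simps)
  qed
qed

lemma einstein_iff_exp_warping:
  assumes "I \<noteq> {}" "is_interval I" "U \<noteq> {}" "CARD('n) > 1"
  shows "einstein D G (ssm_coeff G dt_field) lam \<longleftrightarrow> lam = 0 \<and>
     (\<exists>c1 c2. (\<forall>t\<in>I. f t = c1 * exp t + c2) \<and>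
        einstein U GF (christoffel GF) (real (CARD('n) - 1) * c2^2))"
proof -
  have n: "real (CARD('n) - 1) = real CARD('n) - 1" "real CARD('n) > 1"
    using assms(4) by (simp_all add: of_nat_diff)
  obtain x0 where x0: "x0 \<in> U" using assms(3) by blast
  obtain t0 where t0: "t0 \<in> I" using assms(1) by blast
  define \<kappa> where
    "\<kappa> t = lam * f t ^ 2 + f t * (f2 t - f1 t) + (real CARD('n) - 1) * (f1 t - f t) ^ 2" for t
  show ?thesis
    unfolding einstein_iff_warping_ode[OF assms(3)] \<kappa>_def[symmetric]
  proof (intro iffI; elim conjE exE)
    assume time: "\<forall>t\<in>I. real CARD('n) * (f2 t - f1 t) = - lam * f t"
      and fibre: "\<forall>t\<in>I. einstein U GF (christoffel GF) (\<kappa> t)"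
    have \<kappa>_const: "\<kappa> t = \<kappa> t0" if "t \<in> I" for t
      using einstein_const_unique[of U GF "christoffel GF" "\<kappa> t" "\<kappa> t0" x0] fibre that t0
        GF_invertible[OF x0] x0 by blast
    have lam0: "lam = 0"
    proof (rule warping_einstein_const_eq_0[OF open_I t0 _ n(2) f_deriv f1_deriv])
      show "f t0 \<noteq> 0" using f_pos t0 by fastforce
    qed (use time \<kappa>_const in \<open>auto simp: \<kappa>_def\<close>)
    have "(f1 has_real_derivative f1 t) (at t)" if "t \<in> I" for t
      using f1_deriv[OF that] time[rule_format, OF that] lam0 n(2) by simp
    then obtain c1 c2 where "\<And>t. t \<in> I \<Longrightarrow> f t = c1 * exp t + c2"
      using exp_affine_if_second_deriv_eq_deriv[OF open_I is_interval_connected[OF assms(2)] f_deriv]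
      by blast
    then have c: "\<forall>t\<in>I. f t = c1 * exp t + c2" by blast
    have "\<kappa> t0 = real (CARD('n) - 1) * c2^2"
      using deriv_exp_affine[OF open_I c t0] c t0 lam0 n(1) by (simp add: \<kappa>_def)
    then have "einstein U GF (christoffel GF) (real (CARD('n) - 1) * c2^2)"
      using fibre t0 by auto
    then show "lam = 0 \<and> (\<exists>c1 c2. (\<forall>t\<in>I. f t = c1 * exp t + c2) \<and>
        einstein U GF (christoffel GF) (real (CARD('n) - 1) * c2^2))"
      using lam0 c by blast
  next
    fix c1 c2
    assume lam0: "lam = 0" and c: "\<forall>t\<in>I. f t = c1 * exp t + c2"
      and EF: "einstein U GF (christoffel GF) (real (CARD('n) - 1) * c2^2)"
    note d = deriv_exp_affine[OF open_I c]
    have "\<kappa> t = real (CARD('n) - 1) * c2^2" if "t \<in> I" for t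
      using d[OF that] c that lam0 n(1) by (simp add: \<kappa>_def)
    then show "(\<forall>t\<in>I. real CARD('n) * (f2 t - f1 t) = - lam * f t) \<and>
        (\<forall>t\<in>I. einstein U GF (christoffel GF) (\<kappa> t))"
      using d lam0 EF by simp
  qed
qed

end

theorem theorem4p19:
  fixes I :: "real set" and f :: "real \<Rightarrow> real"
    and U :: "(real^'n) set" and GF :: "real^'n \<Rightarrow> real^'n^'n" and lam :: real
  assumes "open I" and "is_interval I" and "I \<noteq> {}"
    and "smooth_on_real I f" and "\<forall>t\<in>I. f t > 0"
    and "U \<noteq> {}" and "riem_metric U GF"
    and "CARD('n) > 1"
  shows "einstein (wp_domain I U) (wp_metric f GF)
           (ssm_coeff (wp_metric f GF) dt_field) lam
         \<longleftrightarrow> lam = 0 \<and>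
           (\<exists>c1 c2. (\<forall>t\<in>I. f t = c1 * exp t + c2) \<and>
              einstein U GF (christoffel GF) (real (CARD('n) - 1) * c2^2))"
proof -
  have "\<forall>t\<in>I. ((deriv ^^ k) f) differentiable at t" for k
    using assms(4) unfolding smooth_on_real_def by blast
  from this[of 0] this[of 1]
  have diff: "\<forall>t\<in>I. f differentiable at t" "\<forall>t\<in>I. deriv f differentiable at t"
    by simp_all
  interpret lorentzian_warped_product I f U GF
    by unfold_locales (use assms(1,5,7) diff in \<open>simp_all add: riem_metric_def\<close>)
  show ?thesis using einstein_iff_exp_warping[OF assms(3,2,6,8)] .
qed

end
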